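(* Let $\mathcal{X}$ be a connected $n$-premaniplex with base flag $x_0$ and $N=\operatorname{Stab}_{\mathcal{C}^n}(x_0)$, and let $(\mathcal{Y},\eta)$ be an $(n,m)$-voltage operator that preserves connectivity, with base flag $y_0$ of $\mathcal{Y}$, $L=\operatorname{Stab}_{\mathcal{C}^m}(y_0)$ and $\zeta:L\to\mathcal{C}^n$, $\zeta(\omega)=\eta(W_\omega(y_0))$. If $\upsilon\in\operatorname{N}_{\mathcal{C}^m}(\zeta^{-1}(N))\setminus L$, then $\mathcal{X}$ covers the premaniplex $\mathcal{Z}_\upsilon=\mathcal{C}^n/\zeta(L\cap L^\upsilon)$.
   Context: An $n$-premaniplex is an edge-coloured graph (semi-edges and parallel edges allowed) with colours $\{0,\dots,n-1\}$ such that every vertex (flag) is the start of exactly one dart of each colour, and for $|i-j|\ge2$ alternating $i,j$-paths of length 4 are closed; $x^i$ is the $i$-adjacent flag of $x$. $\mathcal{C}^n=\langle r_0,\dots,r_{n-1}\mid r_i^2,\ (r_ir_j)^2\ (|i-j|\ge2)\rangle$ acts on the left on flags by $r_ix=x^i$. A covering is a surjective map of flags preserving $i$-adjacency for all $i$. $L^\upsilon=\upsilon^{-1}L\upsilon$. For a subgroup $K\le\mathcal{C}^n$, the coset premaniplex $\mathcal{C}^n/K$ has flags the left cosets $\omega K$ with $(\omega K)^i=r_i\omega K$. For a flag $y$ of an $m$-premaniplex $\mathcal{Y}$ and $\omega\in\mathcal{C}^m$, $W_\omega(y)$ is the homotopy class of paths from $y$ whose colour sequence $i_1,\dots,i_k$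 satisfies $r_{i_k}\cdots r_{i_1}=\omega$; these form the fundamental groupoid $\Pi(\mathcal{Y})$. A voltage assignment $\eta:\Pi(\mathcal{Y})\to\mathcal{C}^n$ satisfies $\eta(W_1W_2)=\eta(W_2)\eta(W_1)$; $(\mathcal{Y},\eta)$ is an $(n,m)$-voltage operator. $\mathcal{X}\rtimes_\eta\mathcal{Y}$ has flags $\mathcal{X}\times\mathcal{Y}$ and $(x,y)^i=(\eta(W_{r_i}(y))x,r_iy)$, $i\in\{0,\dots,m-1\}$. The operator preserves connectivity if $\mathcal{X}\rtimes_\eta\mathcal{Y}$ is connected whenever $\mathcal{X}$ is. *)

theory Defs
  imports "HOL-Algebra.Group_Action"
begin

text \<open>A word [a1,...,ak] over the alphabet {0..<n} represents the product r_a1 r_a2 ... r_ak.\<close>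

inductive cox_eq :: "nat \<Rightarrow> nat list \<Rightarrow> nat list \<Rightarrow> bool" for n where
  refl: "set w \<subseteq> {..<n} \<Longrightarrow> cox_eq n w w"
| sym: "cox_eq n u v \<Longrightarrow> cox_eq n v u"
| trans: "cox_eq n u v \<Longrightarrow> cox_eq n v w \<Longrightarrow> cox_eq n u w"
| cancel: "set u \<subseteq> {..<n} \<Longrightarrow> set v \<subseteq> {..<n} \<Longrightarrow> i < n \<Longrightarrow>
           cox_eq n (u @ [i, i] @ v) (u @ v)"
| comm: "set u \<subseteq> {..<n} \<Longrightarrow> set v \<subseteq> {..<n} \<Longrightarrow> i < n \<Longrightarrow> j < n \<Longrightarrow>
           (i + 2 \<le> j \<or> j + 2 \<le> i) \<Longrightarrow> cox_eq n (u @ [i, j] @ v) (u @ [j, i] @ v)"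

definition cox_class :: "nat \<Rightarrow> nat list \<Rightarrow> nat list set" where
  "cox_class n w = {v. cox_eq n w v}"

definition cox_group :: "nat \<Rightarrow> nat list set monoid" where
  "cox_group n = \<lparr> carrier = {cox_class n w | w. set w \<subseteq> {..<n}},
                   mult = (\<lambda>A B. {v. \<exists>a\<in>A. \<exists>b\<in>B. cox_eq n (a @ b) v}),
                   one = cox_class n [] \<rparr>"

definition cox_gen :: "nat \<Rightarrow> nat \<Rightarrow> nat list set" where
  "cox_gen n i = cox_class n [i]"

text \<open>An n-premaniplex: flag set F, adj i x = x^i (i-adjacent flag; fixed points are semi-edges).\<close>
definition premaniplex :: "nat \<Rightarrow> 'a set \<Rightarrow> (nat \<Rightarrow> 'a \<Rightarrow> 'a) \<Rightarrow> bool" where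
  "premaniplex n F adj \<longleftrightarrow>
     (\<forall>i<n. \<forall>x\<in>F. adj i x \<in> F \<and> adj i (adj i x) = x) \<and>
     (\<forall>i<n. \<forall>j<n. (i + 2 \<le> j \<or> j + 2 \<le> i) \<longrightarrow>
        (\<forall>x\<in>F. adj i (adj j (adj i (adj j x))) = x))"

definition wact :: "(nat \<Rightarrow> 'a \<Rightarrow> 'a) \<Rightarrow> nat list \<Rightarrow> 'a \<Rightarrow> 'a" where
  "wact adj w x = foldr adj w x"

text \<open>Left action of an element of C^n (well defined on premaniplexes).\<close>
definition cact :: "(nat \<Rightarrow> 'a \<Rightarrow> 'a) \<Rightarrow> nat list set \<Rightarrow> 'a \<Rightarrow> 'a" where
  "cact adj g x = wact adj (SOME w. w \<in> g) x"

definition pm_connected :: "nat \<Rightarrow> 'a set \<Rightarrow> (nat \<Rightarrow> 'a \<Rightarrow> 'a) \<Rightarrow> bool" where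
  "pm_connected n F adj \<longleftrightarrow>
     (\<forall>x\<in>F. \<forall>y\<in>F. \<exists>w. set w \<subseteq> {..<n} \<and> wact adj w x = y)"

definition stab :: "nat \<Rightarrow> (nat \<Rightarrow> 'a \<Rightarrow> 'a) \<Rightarrow> 'a \<Rightarrow> nat list set set" where
  "stab n adj x0 = {g \<in> carrier (cox_group n). cact adj g x0 = x0}"

definition covers :: "nat \<Rightarrow> 'a set \<Rightarrow> (nat \<Rightarrow> 'a \<Rightarrow> 'a) \<Rightarrow> 'b set \<Rightarrow> (nat \<Rightarrow> 'b \<Rightarrow> 'b) \<Rightarrow> bool" where
  "covers n F1 adj1 F2 adj2 \<longleftrightarrow>
     (\<exists>\<phi>. \<phi> ` F1 = F2 \<and> (\<forall>x\<in>F1. \<forall>i<n. \<phi> (adj1 i x) = adj2 i (\<phi> x)))"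

definition coset_flags :: "nat \<Rightarrow> nat list set set \<Rightarrow> nat list set set set" where
  "coset_flags n K = {\<omega> <#\<^bsub>cox_group n\<^esub> K | \<omega>. \<omega> \<in> carrier (cox_group n)}"

definition coset_adj :: "nat \<Rightarrow> nat \<Rightarrow> nat list set set \<Rightarrow> nat list set set" where
  "coset_adj n i C = cox_gen n i <#\<^bsub>cox_group n\<^esub> C"

text \<open>The fundamental groupoid: the class W_\<omega>(y) is represented by the pair (y, \<omega>);
  its end flag is \<omega> y, and W_\<omega>(y) followed by W_\<omega>'(\<omega> y) is W_(\<omega>'\<omega>)(y).
  A voltage assignment eta y \<omega> = \<eta>(W_\<omega>(y)) satisfies \<eta>(W1 W2) = \<eta>(W2) \<eta>(W1).\<close>
definition voltage_assignment ::
  "nat \<Rightarrow> nat \<Rightarrow> 'y set \<Rightarrow> (nat \<Rightarrow> 'y \<Rightarrow> 'y) \<Rightarrow> ('y \<Rightarrow> nat list set \<Rightarrow> nat list set) \<Rightarrow> bool" where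
  "voltage_assignment n m FY adjY eta \<longleftrightarrow>
     (\<forall>y\<in>FY. \<forall>\<omega>\<in>carrier (cox_group m). eta y \<omega> \<in> carrier (cox_group n)) \<and>
     (\<forall>y\<in>FY. \<forall>\<omega>\<in>carrier (cox_group m). \<forall>\<omega>'\<in>carrier (cox_group m).
        eta y (\<omega>' \<otimes>\<^bsub>cox_group m\<^esub> \<omega>) =
        eta (cact adjY \<omega> y) \<omega>' \<otimes>\<^bsub>cox_group n\<^esub> eta y \<omega>)"

definition vo_adj ::
  "nat \<Rightarrow> (nat \<Rightarrow> 'x \<Rightarrow> 'x) \<Rightarrow> (nat \<Rightarrow> 'y \<Rightarrow> 'y) \<Rightarrow> ('y \<Rightarrow> nat list set \<Rightarrow> nat list set)
   \<Rightarrow> nat \<Rightarrow> 'x \<times> 'y \<Rightarrow> 'x \<times> 'y" where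
  "vo_adj m adjX adjY eta i p = (cact adjX (eta (snd p) (cox_gen m i)) (fst p), adjY i (snd p))"

text \<open>Preserving connectivity. Every connected premaniplex is countable (C^n is countable),
  so quantifying over premaniplexes with flags in nat covers all of them up to isomorphism.\<close>
definition preserves_connectivity ::
  "nat \<Rightarrow> nat \<Rightarrow> 'y set \<Rightarrow> (nat \<Rightarrow> 'y \<Rightarrow> 'y) \<Rightarrow> ('y \<Rightarrow> nat list set \<Rightarrow> nat list set) \<Rightarrow> bool" where
  "preserves_connectivity n m FY adjY eta \<longleftrightarrow>
     (\<forall>(FX :: nat set) adjX. premaniplex n FX adjX \<and> pm_connected n FX adjX \<longrightarrow>
        pm_connected m (FX \<times> FY) (vo_adj m adjX adjY eta))"

definition conj_sub :: "('a, 'b) monoid_scheme \<Rightarrow> 'a set \<Rightarrow> 'a \<Rightarrow> 'a set" where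
  "conj_sub G L u = {inv\<^bsub>G\<^esub> u \<otimes>\<^bsub>G\<^esub> l \<otimes>\<^bsub>G\<^esub> u | l. l \<in> L}"

end

(* Applying the operator to the regular premaniplex C^n shows that \<zeta> maps L onto C^n, and \<zeta>
   is a homomorphism on L because L fixes y0. Given g in N, pick \<omega> \<in> L with \<zeta>(\<omega>) = g. Then
   \<omega> lies in \<zeta>^-1(N), which \<upsilon> normalizes, so \<upsilon> \<omega> \<upsilon>^-1 \<in> \<zeta>^-1(N) \<subseteq> L, that is
   \<omega> \<in> L \<inter> L^\<upsilon>. Hence N is contained in the subgroup K = \<zeta>(L \<inter> L^\<upsilon>) of C^n, and a connected
   premaniplex whose base flag has stabiliser inside K covers C^n/K by \<omega> x0 \<mapsto> \<omega> K. *)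
theory Submission
  imports Defs "HOL-Library.Countable_Set"
begin

section \<open>The group C^n\<close>

abbreviation cox_word :: "nat \<Rightarrow> nat list \<Rightarrow> bool" where
  "cox_word n w \<equiv> set w \<subseteq> {..<n}"

lemma cox_eq_words: "cox_eq n u v \<Longrightarrow> cox_word n u \<and> cox_word n v"
  by (induction rule: cox_eq.induct) auto

lemma cox_eq_append_left: "cox_eq n u v \<Longrightarrow> cox_word n a \<Longrightarrow> cox_eq n (a @ u) (a @ v)"
proof (induction rule: cox_eq.induct)
  case (refl w)
  then show ?case by (intro cox_eq.refl) auto
next
  case (cancel u v i)
  then show ?case using cox_eq.cancel[where n=n and u="a @ u" and v=v and i=i] by auto
next
  case (comm u v i j)
  then show ?case using cox_eq.comm[where n=n and u="a @ u" and v=v and i=i and j=j] by auto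
qed (auto intro: cox_eq.sym cox_eq.trans)

lemma cox_eq_append_right: "cox_eq n u v \<Longrightarrow> cox_word n a \<Longrightarrow> cox_eq n (u @ a) (v @ a)"
proof (induction rule: cox_eq.induct)
  case (refl w)
  then show ?case by (intro cox_eq.refl) auto
next
  case (cancel u v i)
  then show ?case using cox_eq.cancel[where n=n and u=u and v="v @ a" and i=i] by auto
next
  case (comm u v i j)
  then show ?case using cox_eq.comm[where n=n and u=u and v="v @ a" and i=i and j=j] by auto
qed (auto intro: cox_eq.sym cox_eq.trans)

lemma cox_eq_append: "cox_eq n u u' \<Longrightarrow> cox_eq n v v' \<Longrightarrow> cox_eq n (u @ v) (u' @ v')"
  by (meson cox_eq.trans cox_eq_append_left cox_eq_append_right cox_eq_words)

lemma cox_eq_append_rev: "cox_word n w \<Longrightarrow> cox_eq n (w @ rev w) []"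
proof (induction w)
  case Nil
  then show ?case by (auto intro: cox_eq.refl)
next
  case (Cons i w)
  then have "cox_eq n ([i] @ (w @ rev w) @ [i]) ([i] @ [] @ [i])"
    by (intro cox_eq_append_left cox_eq_append_right) auto
  moreover have "cox_eq n ([] @ [i, i] @ []) ([] @ [])"
    using Cons.prems by (intro cox_eq.cancel) auto
  ultimately show ?case by (auto intro: cox_eq.trans)
qed

lemma cox_class_self: "cox_word n w \<Longrightarrow> w \<in> cox_class n w"
  by (simp add: cox_class_def cox_eq.refl)

lemma cox_class_eq: "cox_eq n u v \<Longrightarrow> cox_class n u = cox_class n v"
  unfolding cox_class_def by (auto intro: cox_eq.trans cox_eq.sym)

lemma carrier_cox_group_iff: "g \<in> carrier (cox_group n) \<longleftrightarrow> (\<exists>w. cox_word n w \<and> g = cox_class n w)"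
  by (auto simp: cox_group_def)

lemma cox_class_closed [simp]: "cox_word n w \<Longrightarrow> cox_class n w \<in> carrier (cox_group n)"
  by (auto simp: cox_group_def)

lemma cox_gen_closed: "i < n \<Longrightarrow> cox_gen n i \<in> carrier (cox_group n)"
  by (simp add: cox_gen_def)

lemma cox_group_one: "\<one>\<^bsub>cox_group n\<^esub> = cox_class n []"
  by (simp add: cox_group_def)

lemma cox_class_mult:
  assumes "cox_word n a" "cox_word n b"
  shows "cox_class n a \<otimes>\<^bsub>cox_group n\<^esub> cox_class n b = cox_class n (a @ b)"
proof -
  have "(\<exists>a'\<in>cox_class n a. \<exists>b'\<in>cox_class n b. cox_eq n (a' @ b') v) \<longleftrightarrow> v \<in> cox_class n (a @ b)"
    for v
    using assms cox_class_self[OF assms(1)] cox_class_self[OF assms(2)]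
    unfolding cox_class_def by (blast intro: cox_eq_append cox_eq.trans)
  then show ?thesis by (auto simp: cox_group_def)
qed

lemma group_cox_group: "group (cox_group n)"
proof (rule groupI)
  fix x y assume "x \<in> carrier (cox_group n)" "y \<in> carrier (cox_group n)"
  then show "x \<otimes>\<^bsub>cox_group n\<^esub> y \<in> carrier (cox_group n)"
    unfolding carrier_cox_group_iff by (metis cox_class_mult le_sup_iff set_append)
next
  fix x y z
  assume "x \<in> carrier (cox_group n)" "y \<in> carrier (cox_group n)" "z \<in> carrier (cox_group n)"
  then show "x \<otimes>\<^bsub>cox_group n\<^esub> y \<otimes>\<^bsub>cox_group n\<^esub> z = x \<otimes>\<^bsub>cox_group n\<^esub> (y \<otimes>\<^bsub>cox_group n\<^esub> z)"
    unfolding carrier_cox_group_iff by (auto simp: cox_class_mult)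
next
  fix x assume "x \<in> carrier (cox_group n)"
  then obtain w where w: "cox_word n w" "x = cox_class n w"
    unfolding carrier_cox_group_iff by auto
  show "\<one>\<^bsub>cox_group n\<^esub> \<otimes>\<^bsub>cox_group n\<^esub> x = x"
    using w by (simp add: cox_class_mult cox_group_one)
  have "cox_eq n (rev w @ w) []"
    using cox_eq_append_rev[where n=n and w="rev w"] w by simp
  then show "\<exists>y\<in>carrier (cox_group n). y \<otimes>\<^bsub>cox_group n\<^esub> x = \<one>\<^bsub>cox_group n\<^esub>"
    using w by (intro bexI[of _ "cox_class n (rev w)"]) (auto simp: cox_class_mult cox_group_one cox_class_eq)
qed (simp add: cox_group_one)

lemma countable_carrier_cox_group: "countable (carrier (cox_group n))"
proof (rule countable_subset)
  show "carrier (cox_group n) \<subseteq> range (cox_class n)"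
    by (auto simp: cox_group_def)
qed simp

section \<open>The action of C^n on the flags of a premaniplex\<close>

lemma wact_Nil [simp]: "wact adj [] x = x"
  by (simp add: wact_def)

lemma wact_Cons [simp]: "wact adj (i # w) x = adj i (wact adj w x)"
  by (simp add: wact_def)

lemma wact_append: "wact adj (u @ v) x = wact adj u (wact adj v x)"
  by (simp add: wact_def)

lemma wact_closed: "premaniplex n F adj \<Longrightarrow> cox_word n w \<Longrightarrow> x \<in> F \<Longrightarrow> wact adj w x \<in> F"
  by (induction w) (auto simp: premaniplex_def)

lemma premaniplex_adj_commute:
  assumes P: "premaniplex n F adj" and "i < n" "j < n" "i + 2 \<le> j \<or> j + 2 \<le> i" and "x \<in> F"
  shows "adj i (adj j x) = adj j (adj i x)"
proof -
  have inv: "adj k z \<in> F" "adj k (adj k z) = z" if "k < n" "z \<in> F" for k z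
    using P that by (auto simp: premaniplex_def)
  have "adj i (adj j (adj i (adj j x))) = x"
    using P assms by (auto simp: premaniplex_def)
  then have "adj j (adj i (adj i (adj j (adj i (adj j x))))) = adj j (adj i x)"
    by simp
  then show ?thesis
    using assms inv by simp
qed

lemma wact_cox_eq:
  assumes P: "premaniplex n F adj"
  shows "cox_eq n u v \<Longrightarrow> x \<in> F \<Longrightarrow> wact adj u x = wact adj v x"
proof (induction rule: cox_eq.induct)
  case (cancel u v i)
  then have "wact adj v x \<in> F"
    using wact_closed[OF P] by auto
  then show ?case
    using P cancel by (simp add: wact_append premaniplex_def)
next
  case (comm u v i j)
  then have "wact adj v x \<in> F"
    using wact_closed[OF P] by auto
  with comm have "adj i (adj j (wact adj v x)) = adj j (adj i (wact adj v x))"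
    by (intro premaniplex_adj_commute[OF P]) auto
  then show ?case
    by (simp add: wact_append)
qed auto

lemma cox_some_word: "g \<in> carrier (cox_group n) \<Longrightarrow> cox_word n (SOME w. w \<in> g)"
  by (metis carrier_cox_group_iff cox_class_self cox_eq_words mem_Collect_eq someI_ex cox_class_def)

lemma cact_cox_class:
  assumes P: "premaniplex n F adj" and "cox_word n w" "x \<in> F"
  shows "cact adj (cox_class n w) x = wact adj w x"
proof -
  have "(SOME v. v \<in> cox_class n w) \<in> cox_class n w"
    using cox_class_self[OF assms(2)] by (rule someI)
  then have "cox_eq n (SOME v. v \<in> cox_class n w) w"
    by (simp add: cox_class_def cox_eq.sym)
  then show ?thesis
    using wact_cox_eq[OF P] assms(3) by (simp add: cact_def)
qed

lemma cact_closed: "premaniplex n F adj \<Longrightarrow> g \<in> carrier (cox_group n) \<Longrightarrow> x \<in> F \<Longrightarrow> cact adj g x \<in> F"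
  by (simp add: cact_def cox_some_word wact_closed)

lemma cact_mult:
  assumes P: "premaniplex n F adj" and "g \<in> carrier (cox_group n)" "h \<in> carrier (cox_group n)"
    and "x \<in> F"
  shows "cact adj (g \<otimes>\<^bsub>cox_group n\<^esub> h) x = cact adj g (cact adj h x)"
proof -
  obtain u v where "cox_word n u" "g = cox_class n u" "cox_word n v" "h = cox_class n v"
    using assms(2,3) unfolding carrier_cox_group_iff by blast
  then show ?thesis
    using assms(4) wact_closed[OF P]
    by (simp add: cox_class_mult cact_cox_class[OF P] wact_append)
qed

lemma cact_one: "premaniplex n F adj \<Longrightarrow> x \<in> F \<Longrightarrow> cact adj \<one>\<^bsub>cox_group n\<^esub> x = x"
  by (simp add: cox_group_one cact_cox_class)

lemma cact_cox_gen: "premaniplex n F adj \<Longrightarrow> i < n \<Longrightarrow> x \<in> F \<Longrightarrow> cact adj (cox_gen n i) x = adj i x"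
  by (simp add: cox_gen_def cact_cox_class)

lemma stab_subgroup:
  assumes P: "premaniplex n F adj" and "x0 \<in> F"
  shows "subgroup (stab n adj x0) (cox_group n)"
proof -
  interpret group "cox_group n" by (rule group_cox_group)
  show ?thesis
  proof (rule subgroupI)
    show "stab n adj x0 \<subseteq> carrier (cox_group n)"
      by (auto simp: stab_def)
    show "stab n adj x0 \<noteq> {}"
      using cact_one[OF P assms(2)] by (auto simp: stab_def)
  next
    fix g assume "g \<in> stab n adj x0"
    then have g: "g \<in> carrier (cox_group n)" "cact adj g x0 = x0"
      by (auto simp: stab_def)
    have "cact adj (inv\<^bsub>cox_group n\<^esub> g) x0 = cact adj (inv\<^bsub>cox_group n\<^esub> g) (cact adj g x0)"
      using g by simp
    also have "\<dots> = cact adj (inv\<^bsub>cox_group n\<^esub> g \<otimes>\<^bsub>cox_group n\<^esub> g) x0"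
      by (rule cact_mult[symmetric, OF P inv_closed[OF g(1)] g(1) assms(2)])
    also have "\<dots> = x0"
      using g cact_one[OF P assms(2)] by simp
    finally show "inv\<^bsub>cox_group n\<^esub> g \<in> stab n adj x0"
      using g by (simp add: stab_def)
  next
    fix g h assume "g \<in> stab n adj x0" "h \<in> stab n adj x0"
    then show "g \<otimes>\<^bsub>cox_group n\<^esub> h \<in> stab n adj x0"
      using cact_mult[OF P _ _ assms(2)] by (auto simp: stab_def)
  qed
qed

section \<open>Coverings of coset premaniplexes\<close>

lemma pm_connected_cact_orbit:
  assumes P: "premaniplex n F adj" and "pm_connected n F adj" "x0 \<in> F" "x \<in> F"
  shows "\<exists>g\<in>carrier (cox_group n). cact adj g x0 = x"
proof -
  obtain w where "cox_word n w" "wact adj w x0 = x"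
    using assms unfolding pm_connected_def by blast
  then show ?thesis
    using cact_cox_class[OF P _ assms(3)] cox_class_closed by blast
qed

lemma l_coset_eq_if_cact_eq:
  assumes P: "premaniplex n F adj" and x0: "x0 \<in> F"
    and K: "subgroup K (cox_group n)" "stab n adj x0 \<subseteq> K"
    and g: "g \<in> carrier (cox_group n)" and h: "h \<in> carrier (cox_group n)"
    and gh: "cact adj g x0 = cact adj h x0"
  shows "g <#\<^bsub>cox_group n\<^esub> K = h <#\<^bsub>cox_group n\<^esub> K"
proof -
  interpret group "cox_group n" by (rule group_cox_group)
  define k where "k = inv\<^bsub>cox_group n\<^esub> g \<otimes>\<^bsub>cox_group n\<^esub> h"
  have k: "k \<in> carrier (cox_group n)"
    using g h by (simp add: k_def)
  have "cact adj k x0 = cact adj (inv\<^bsub>cox_group n\<^esub> g) (cact adj g x0)"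
    using cact_mult[OF P inv_closed[OF g] h x0] gh by (simp add: k_def)
  also have "\<dots> = x0"
    using cact_mult[OF P inv_closed[OF g] g x0] g cact_one[OF P x0] by simp
  finally have "k \<in> K"
    using k K(2) by (auto simp: stab_def)
  moreover have "h = g \<otimes>\<^bsub>cox_group n\<^esub> k"
    using g h by (simp add: k_def m_assoc[symmetric])
  ultimately have "h \<in> g <#\<^bsub>cox_group n\<^esub> K"
    unfolding l_coset_def by blast
  then show ?thesis
    using l_repr_independence g K(1) by blast
qed

text \<open>The covering sends the flag g x0 to the coset gK.\<close>

lemma connected_covers_coset_premaniplex:
  assumes P: "premaniplex n F adj" and conn: "pm_connected n F adj" and x0: "x0 \<in> F"
    and K: "subgroup K (cox_group n)" "stab n adj x0 \<subseteq> K"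
  shows "covers n F adj (coset_flags n K) (coset_adj n)"
proof -
  interpret group "cox_group n" by (rule group_cox_group)
  define \<phi> where
    "\<phi> x = (SOME g. g \<in> carrier (cox_group n) \<and> cact adj g x0 = x) <#\<^bsub>cox_group n\<^esub> K" for x
  have \<phi>: "\<phi> (cact adj g x0) = g <#\<^bsub>cox_group n\<^esub> K" if g: "g \<in> carrier (cox_group n)" for g
  proof -
    let ?g' = "SOME g'. g' \<in> carrier (cox_group n) \<and> cact adj g' x0 = cact adj g x0"
    have "?g' \<in> carrier (cox_group n) \<and> cact adj ?g' x0 = cact adj g x0"
      by (rule someI[of _ g]) (use g in simp)
    then show ?thesis
      unfolding \<phi>_def using l_coset_eq_if_cact_eq[OF P x0 K] g by metis
  qed
  have "\<phi> ` F = coset_flags n K"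
  proof
    show "\<phi> ` F \<subseteq> coset_flags n K"
      using pm_connected_cact_orbit[OF P conn x0] \<phi> unfolding coset_flags_def by fastforce
    show "coset_flags n K \<subseteq> \<phi> ` F"
      using cact_closed[OF P _ x0] \<phi> unfolding coset_flags_def by (auto intro!: image_eqI)
  qed
  moreover have "\<phi> (adj i x) = coset_adj n i (\<phi> x)" if "x \<in> F" "i < n" for x i
  proof -
    obtain g where g: "g \<in> carrier (cox_group n)" "cact adj g x0 = x"
      using pm_connected_cact_orbit[OF P conn x0 \<open>x \<in> F\<close>] by blast
    have r: "cox_gen n i \<in> carrier (cox_group n)"
      using \<open>i < n\<close> by (rule cox_gen_closed)
    have "adj i x = cact adj (cox_gen n i \<otimes>\<^bsub>cox_group n\<^esub> g) x0"
      using cact_mult[OF P r g(1) x0] cact_cox_gen[OF P \<open>i < n\<close> \<open>x \<in> F\<close>] g(2) by simp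
    then have "\<phi> (adj i x) = (cox_gen n i \<otimes>\<^bsub>cox_group n\<^esub> g) <#\<^bsub>cox_group n\<^esub> K"
      using \<phi> r g(1) by simp
    also have "\<dots> = cox_gen n i <#\<^bsub>cox_group n\<^esub> (g <#\<^bsub>cox_group n\<^esub> K)"
      using lcos_m_assoc[OF subgroup.subset[OF K(1)] r g(1)] by simp
    also have "\<dots> = coset_adj n i (\<phi> x)"
      using \<phi>[OF g(1)] g(2) by (simp add: coset_adj_def)
    finally show ?thesis .
  qed
  ultimately show ?thesis
    unfolding covers_def by blast
qed

section \<open>The regular premaniplex and relabelling of flags\<close>

definition regular_adj :: "nat \<Rightarrow> nat \<Rightarrow> nat list set \<Rightarrow> nat list set" where
  "regular_adj n i g = cox_gen n i \<otimes>\<^bsub>cox_group n\<^esub> g"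

lemma wact_regular_adj:
  assumes "cox_word n w" "g \<in> carrier (cox_group n)"
  shows "wact (regular_adj n) w g = cox_class n w \<otimes>\<^bsub>cox_group n\<^esub> g"
proof -
  interpret group "cox_group n" by (rule group_cox_group)
  show ?thesis
    using assms(1)
  proof (induction w)
    case Nil
    then show ?case
      using assms(2) by (simp add: cox_group_one[symmetric])
  next
    case (Cons i w)
    then have "cox_class n (i # w) = cox_gen n i \<otimes>\<^bsub>cox_group n\<^esub> cox_class n w"
      using cox_class_mult[where n=n and a="[i]" and b=w] by (simp add: cox_gen_def)
    with Cons show ?case
      using assms(2) by (simp add: regular_adj_def m_assoc cox_gen_closed)
  qed
qed

lemma premaniplex_regular: "premaniplex n (carrier (cox_group n)) (regular_adj n)"
proof -
  interpret group "cox_group n" by (rule group_cox_group)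
  have relator: "wact (regular_adj n) w g = g"
    if "cox_eq n w []" "g \<in> carrier (cox_group n)" for w g
  proof -
    have "cox_word n w"
      using cox_eq_words[OF that(1)] by blast
    then show ?thesis
      using that wact_regular_adj cox_class_eq[OF that(1)] by (simp add: cox_group_one[symmetric])
  qed
  show ?thesis
    unfolding premaniplex_def
  proof (intro conjI allI impI ballI)
    fix i g assume "i < n" "g \<in> carrier (cox_group n)"
    then show "regular_adj n i g \<in> carrier (cox_group n)"
      by (simp add: regular_adj_def cox_gen_closed)
    have "cox_eq n ([] @ [i, i] @ []) ([] @ [])"
      using \<open>i < n\<close> by (intro cox_eq.cancel) auto
    then show "regular_adj n i (regular_adj n i g) = g"
      using relator[of "[i, i]" g] \<open>g \<in> carrier (cox_group n)\<close> by simp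
  next
    fix i j g assume ij: "i < n" "j < n" "i + 2 \<le> j \<or> j + 2 \<le> i"
      and g: "g \<in> carrier (cox_group n)"
    have "cox_eq n ([i] @ [j, i] @ [j]) ([i] @ [i, j] @ [j])"
      using ij by (intro cox_eq.comm) auto
    moreover have "cox_eq n ([] @ [i, i] @ [j, j]) ([] @ [j, j])"
      using ij by (intro cox_eq.cancel) auto
    moreover have "cox_eq n ([] @ [j, j] @ []) ([] @ [])"
      using ij by (intro cox_eq.cancel) auto
    ultimately have "cox_eq n [i, j, i, j] []"
      by (auto intro: cox_eq.trans)
    then show "regular_adj n i (regular_adj n j (regular_adj n i (regular_adj n j g))) = g"
      using relator[of "[i, j, i, j]" g] g by simp
  qed
qed

lemma cact_regular_adj:
  "g \<in> carrier (cox_group n) \<Longrightarrow> h \<in> carrier (cox_group n) \<Longrightarrow>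
    cact (regular_adj n) g h = g \<otimes>\<^bsub>cox_group n\<^esub> h"
  unfolding carrier_cox_group_iff[of g]
  using cact_cox_class[OF premaniplex_regular] wact_regular_adj by auto

lemma pm_connected_regular: "pm_connected n (carrier (cox_group n)) (regular_adj n)"
  unfolding pm_connected_def
proof (intro ballI)
  interpret group "cox_group n" by (rule group_cox_group)
  fix g h assume g: "g \<in> carrier (cox_group n)" and h: "h \<in> carrier (cox_group n)"
  then obtain w where w: "cox_word n w" "cox_class n w = h \<otimes>\<^bsub>cox_group n\<^esub> inv\<^bsub>cox_group n\<^esub> g"
    using carrier_cox_group_iff by (metis inv_closed m_closed)
  then have "wact (regular_adj n) w g = h"
    using g h by (simp add: wact_regular_adj m_assoc)
  with w show "\<exists>w. cox_word n w \<and> wact (regular_adj n) w g = h"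
    by blast
qed

definition relabel_adj :: "('a \<Rightarrow> 'b) \<Rightarrow> 'a set \<Rightarrow> (nat \<Rightarrow> 'a \<Rightarrow> 'a) \<Rightarrow> nat \<Rightarrow> 'b \<Rightarrow> 'b" where
  "relabel_adj f F adj i z = f (adj i (inv_into F f z))"

lemma wact_relabel_adj:
  assumes "inj_on f F" "premaniplex n F adj" "cox_word n w" "x \<in> F"
  shows "wact (relabel_adj f F adj) w (f x) = f (wact adj w x)"
  using assms(3)
proof (induction w)
  case (Cons i w)
  then show ?case
    using wact_closed[OF assms(2) _ assms(4)] assms(1) by (simp add: relabel_adj_def)
qed simp

lemma cact_relabel_adj:
  assumes "inj_on f F" "premaniplex n F adj" "g \<in> carrier (cox_group n)" "x \<in> F"
  shows "cact (relabel_adj f F adj) g (f x) = f (cact adj g x)"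
  using wact_relabel_adj[OF assms(1,2) cox_some_word[OF assms(3)] assms(4)] by (simp add: cact_def)

lemma premaniplex_relabel:
  assumes f: "inj_on f F" and P: "premaniplex n F adj"
  shows "premaniplex n (f ` F) (relabel_adj f F adj)"
proof -
  have word: "wact (relabel_adj f F adj) w (f x) = f (wact adj w x)"
    if "cox_word n w" "x \<in> F" for w x
    using wact_relabel_adj[OF f P that] .
  show ?thesis
    unfolding premaniplex_def
  proof (intro conjI allI impI ballI)
    fix i z assume i: "i < n" and "z \<in> f ` F"
    then obtain x where x: "x \<in> F" "z = f x"
      by blast
    have "adj i x \<in> F" "adj i (adj i x) = x"
      using P i x(1) by (auto simp: premaniplex_def)
    then show "relabel_adj f F adj i z \<in> f ` F"
      "relabel_adj f F adj i (relabel_adj f F adj i z) = z"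
      using word[of "[i]" x] word[of "[i, i]" x] i x by auto
  next
    fix i j z assume ij: "i < n" "j < n" "i + 2 \<le> j \<or> j + 2 \<le> i" and "z \<in> f ` F"
    then obtain x where x: "x \<in> F" "z = f x"
      by blast
    have "adj i (adj j (adj i (adj j x))) = x"
      using P ij x(1) by (auto simp: premaniplex_def)
    then show "relabel_adj f F adj i (relabel_adj f F adj j (relabel_adj f F adj i (relabel_adj f F adj j z))) = z"
      using word[of "[i, j, i, j]" x] ij x by simp
  qed
qed

lemma pm_connected_relabel:
  assumes f: "inj_on f F" and P: "premaniplex n F adj" and conn: "pm_connected n F adj"
  shows "pm_connected n (f ` F) (relabel_adj f F adj)"
  using conn wact_relabel_adj[OF f P] unfolding pm_connected_def by fastforce

section \<open>Voltage operators\<close>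

context
  fixes n m :: nat and FY :: "'y set" and adjY :: "nat \<Rightarrow> 'y \<Rightarrow> 'y"
    and eta :: "'y \<Rightarrow> nat list set \<Rightarrow> nat list set"
  assumes Y: "premaniplex m FY adjY" and eta: "voltage_assignment n m FY adjY eta"
begin

lemma voltage_closed: "y \<in> FY \<Longrightarrow> \<omega> \<in> carrier (cox_group m) \<Longrightarrow> eta y \<omega> \<in> carrier (cox_group n)"
  using eta by (simp add: voltage_assignment_def)

lemma voltage_mult:
  "y \<in> FY \<Longrightarrow> \<omega> \<in> carrier (cox_group m) \<Longrightarrow> \<omega>' \<in> carrier (cox_group m) \<Longrightarrow>
    eta y (\<omega>' \<otimes>\<^bsub>cox_group m\<^esub> \<omega>) = eta (cact adjY \<omega> y) \<omega>' \<otimes>\<^bsub>cox_group n\<^esub> eta y \<omega>"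
  using eta by (simp add: voltage_assignment_def)

lemma voltage_one:
  assumes y: "y \<in> FY"
  shows "eta y \<one>\<^bsub>cox_group m\<^esub> = \<one>\<^bsub>cox_group n\<^esub>"
proof -
  interpret Gm: group "cox_group m" by (rule group_cox_group)
  interpret Gn: group "cox_group n" by (rule group_cox_group)
  have e: "eta y \<one>\<^bsub>cox_group m\<^esub> \<in> carrier (cox_group n)"
    using voltage_closed[OF y] by simp
  have "eta y \<one>\<^bsub>cox_group m\<^esub> = eta y \<one>\<^bsub>cox_group m\<^esub> \<otimes>\<^bsub>cox_group n\<^esub> eta y \<one>\<^bsub>cox_group m\<^esub>"
    using voltage_mult[OF y Gm.one_closed Gm.one_closed] cact_one[OF Y y] by simp
  then show ?thesis
    using Gn.l_cancel_one[OF e e] by simp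
qed

lemma group_hom_voltage_stab:
  assumes y0: "y0 \<in> FY"
  shows "group_hom ((cox_group m)\<lparr>carrier := stab m adjY y0\<rparr>) (cox_group n) (eta y0)"
proof -
  interpret Gm: group "cox_group m" by (rule group_cox_group)
  have L: "subgroup (stab m adjY y0) (cox_group m)"
    by (rule stab_subgroup[OF Y y0])
  have "eta y0 (a \<otimes>\<^bsub>cox_group m\<^esub> b) = eta y0 a \<otimes>\<^bsub>cox_group n\<^esub> eta y0 b"
    if "a \<in> stab m adjY y0" "b \<in> stab m adjY y0" for a b
    using voltage_mult[OF y0] that by (simp add: stab_def)
  then have "eta y0 \<in> hom ((cox_group m)\<lparr>carrier := stab m adjY y0\<rparr>) (cox_group n)"
    using voltage_closed[OF y0] by (auto simp: hom_def stab_def)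
  then show ?thesis
    using Gm.subgroup_imp_group[OF L] group_cox_group
    by (simp add: group_hom_def group_hom_axioms_def)
qed

lemma wact_vo_adj:
  assumes X: "premaniplex n FX adjX" and w: "cox_word m w" and x: "x \<in> FX" and y: "y \<in> FY"
  shows "wact (vo_adj m adjX adjY eta) w (x, y) = (cact adjX (eta y (cox_class m w)) x, wact adjY w y)"
  using w
proof (induction w)
  case Nil
  then show ?case
    using voltage_one[OF y] cact_one[OF X x] by (simp add: cox_group_one[symmetric])
next
  case (Cons i w)
  then have i: "i < m" and w: "cox_word m w"
    by auto
  let ?y = "wact adjY w y"
  have y': "?y \<in> FY"
    using wact_closed[OF Y w y] .
  have "eta y (cox_class m (i # w)) = eta y (cox_gen m i \<otimes>\<^bsub>cox_group m\<^esub> cox_class m w)"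
    using cox_class_mult[where n=m and a="[i]" and b=w] i w by (simp add: cox_gen_def)
  also have "\<dots> = eta ?y (cox_gen m i) \<otimes>\<^bsub>cox_group n\<^esub> eta y (cox_class m w)"
    using voltage_mult[OF y _ cox_gen_closed[OF i]] w cact_cox_class[OF Y w y] by simp
  finally have "cact adjX (eta y (cox_class m (i # w))) x =
      cact adjX (eta ?y (cox_gen m i)) (cact adjX (eta y (cox_class m w)) x)"
    using cact_mult[OF X voltage_closed[OF y' cox_gen_closed[OF i]] voltage_closed[OF y] x] w
    by simp
  then show ?case
    using Cons.IH[OF w] by (simp add: vo_adj_def)
qed

text \<open>Preserving connectivity is applied to the regular premaniplex C^n, relabelled by natural
  numbers since preserves_connectivity only speaks about premaniplexes with flags in nat. A walk
  in the product from (1, y0) to (c, y0) is then a word in the stabiliser of y0 with voltage c.\<close>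

lemma voltage_stab_surj:
  assumes pc: "preserves_connectivity n m FY adjY eta" and y0: "y0 \<in> FY"
  shows "eta y0 ` stab m adjY y0 = carrier (cox_group n)"
proof
  show "eta y0 ` stab m adjY y0 \<subseteq> carrier (cox_group n)"
    using voltage_closed[OF y0] by (auto simp: stab_def)
next
  interpret Gn: group "cox_group n" by (rule group_cox_group)
  let ?R = "carrier (cox_group n)"
  let ?f = "to_nat_on ?R"
  let ?adj = "relabel_adj ?f ?R (regular_adj n)"
  have f: "inj_on ?f ?R"
    using countable_carrier_cox_group by blast
  have conn: "pm_connected m (?f ` ?R \<times> FY) (vo_adj m ?adj adjY eta)"
    using pc premaniplex_relabel[OF f premaniplex_regular]
      pm_connected_relabel[OF f premaniplex_regular pm_connected_regular]
    unfolding preserves_connectivity_def by blast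
  have P: "premaniplex n (?f ` ?R) ?adj"
    by (rule premaniplex_relabel[OF f premaniplex_regular])
  show "?R \<subseteq> eta y0 ` stab m adjY y0"
  proof
    fix c assume c: "c \<in> ?R"
    obtain w where w: "cox_word m w"
      and walk: "wact (vo_adj m ?adj adjY eta) w (?f \<one>\<^bsub>cox_group n\<^esub>, y0) = (?f c, y0)"
      using conn c y0 unfolding pm_connected_def by blast
    let ?g = "eta y0 (cox_class m w)"
    have g: "?g \<in> ?R"
      using voltage_closed[OF y0] w by simp
    have "cact ?adj ?g (?f \<one>\<^bsub>cox_group n\<^esub>) = ?f ?g"
      using cact_relabel_adj[OF f premaniplex_regular g Gn.one_closed] cact_regular_adj g by simp
    then have "?f ?g = ?f c" and "wact adjY w y0 = y0"
      using walk wact_vo_adj[OF P w _ y0] by auto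
    then have "?g = c" and "cox_class m w \<in> stab m adjY y0"
      using f g c w cact_cox_class[OF Y w y0] by (auto simp: stab_def inj_on_def)
    then show "c \<in> eta y0 ` stab m adjY y0"
      by blast
  qed
qed

end

lemma (in group) conj_sub_subgroup:
  assumes H: "subgroup H G" and u: "u \<in> carrier G"
  shows "subgroup (conj_sub G H u) G"
proof (rule subgroupI)
  show "conj_sub G H u \<subseteq> carrier G"
    using subgroup.mem_carrier[OF H] u by (auto simp: conj_sub_def)
  show "conj_sub G H u \<noteq> {}"
    using subgroup.one_closed[OF H] by (auto simp: conj_sub_def)
next
  fix a assume "a \<in> conj_sub G H u"
  then obtain h where h: "h \<in> H" "a = inv u \<otimes> h \<otimes> u"
    by (auto simp: conj_sub_def)
  have "h \<in> carrier G"
    using subgroup.mem_carrier[OF H h(1)] .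
  then have "inv a = inv u \<otimes> inv h \<otimes> u"
    using h(2) u by (simp add: inv_mult_group m_assoc)
  then show "inv a \<in> conj_sub G H u"
    using subgroup.m_inv_closed[OF H h(1)] by (auto simp: conj_sub_def)
next
  fix a b assume "a \<in> conj_sub G H u" "b \<in> conj_sub G H u"
  then obtain h k where h: "h \<in> H" "a = inv u \<otimes> h \<otimes> u" and k: "k \<in> H" "b = inv u \<otimes> k \<otimes> u"
    by (auto simp: conj_sub_def)
  have "h \<in> carrier G" "k \<in> carrier G"
    using subgroup.mem_carrier[OF H] h(1) k(1) by auto
  moreover have "u \<otimes> (inv u \<otimes> x) = x" if "x \<in> carrier G" for x
    using u that by (simp add: m_assoc[symmetric])
  ultimately have "a \<otimes> b = inv u \<otimes> (h \<otimes> k) \<otimes> u"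
    using h(2) k(2) u by (simp add: m_assoc)
  then show "a \<otimes> b \<in> conj_sub G H u"
    using subgroup.m_closed[OF H h(1) k(1)] by (auto simp: conj_sub_def)
qed

lemma (in group) normalizer_subset_conj_sub:
  assumes "S \<subseteq> L" "L \<subseteq> carrier G" "u \<in> normalizer G S"
  shows "S \<subseteq> conj_sub G L u"
proof
  fix s assume s: "s \<in> S"
  have u: "u \<in> carrier G"
    using assms(3) by (simp add: normalizer_def stabilizer_def)
  have "S \<subseteq> carrier G"
    using assms(1,2) by (rule subset_trans)
  then have uS: "u <# S #> inv u = S"
    using assms(3) by (simp add: normalizer_def stabilizer_def)
  have sc: "s \<in> carrier G"
    using s assms(1,2) by blast
  have "u \<otimes> s \<otimes> inv u \<in> u <# S #> inv u"
    using s unfolding l_coset_def r_coset_def by blast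
  then have "u \<otimes> s \<otimes> inv u \<in> L"
    using uS assms(1) by blast
  moreover have "s = inv u \<otimes> (u \<otimes> s \<otimes> inv u) \<otimes> u"
    using u sc by (simp add: m_assoc[symmetric]) (simp add: m_assoc)
  ultimately show "s \<in> conj_sub G L u"
    unfolding conj_sub_def by blast
qed

theorem lemma5p6:
  fixes n m :: nat
    and FX :: "'x set" and adjX :: "nat \<Rightarrow> 'x \<Rightarrow> 'x" and x0 :: 'x
    and FY :: "'y set" and adjY :: "nat \<Rightarrow> 'y \<Rightarrow> 'y" and y0 :: 'y
    and eta :: "'y \<Rightarrow> nat list set \<Rightarrow> nat list set"
    and \<upsilon> :: "nat list set"
  assumes X: "premaniplex n FX adjX" "pm_connected n FX adjX" "x0 \<in> FX"
    and Y: "premaniplex m FY adjY" "y0 \<in> FY"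
    and eta: "voltage_assignment n m FY adjY eta"
    and pc: "preserves_connectivity n m FY adjY eta"
    and ups: "\<upsilon> \<in> normalizer (cox_group m)
                 {\<omega> \<in> stab m adjY y0. eta y0 \<omega> \<in> stab n adjX x0}"
             "\<upsilon> \<notin> stab m adjY y0"
  shows "covers n FX adjX
           (coset_flags n (eta y0 ` (stab m adjY y0 \<inter> conj_sub (cox_group m) (stab m adjY y0) \<upsilon>)))
           (coset_adj n)"
proof -
  interpret Gm: group "cox_group m" by (rule group_cox_group)
  let ?L = "stab m adjY y0"
  let ?H = "?L \<inter> conj_sub (cox_group m) ?L \<upsilon>"
  have L: "subgroup ?L (cox_group m)"
    by (rule stab_subgroup[OF Y])
  have "\<upsilon> \<in> carrier (cox_group m)"
    using ups(1) by (simp add: normalizer_def stabilizer_def)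
  then have H: "subgroup ?H (cox_group m)"
    by (intro Gm.subgroups_Inter_pair L Gm.conj_sub_subgroup)
  have "subgroup (eta y0 ` ?H) (cox_group n)"
    by (rule group_hom.subgroup_img_is_subgroup[OF group_hom_voltage_stab[OF Y(1) eta Y(2)]
          Gm.subgroup_incl[OF H L Int_lower1]])
  moreover have "stab n adjX x0 \<subseteq> eta y0 ` ?H"
  proof
    fix g assume g: "g \<in> stab n adjX x0"
    then have "g \<in> eta y0 ` ?L"
      using voltage_stab_surj[OF Y(1) eta pc Y(2)] by (simp add: stab_def)
    then obtain \<omega> where \<omega>: "\<omega> \<in> ?L" "eta y0 \<omega> = g"
      by blast
    have "{\<omega> \<in> ?L. eta y0 \<omega> \<in> stab n adjX x0} \<subseteq> conj_sub (cox_group m) ?L \<upsilon>"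
      using Gm.normalizer_subset_conj_sub[OF _ subgroup.subset[OF L] ups(1)] by blast
    then have "\<omega> \<in> ?H"
      using \<omega> g by blast
    with \<omega>(2) show "g \<in> eta y0 ` ?H"
      by blast
  qed
  ultimately show ?thesis
    by (rule connected_covers_coset_premaniplex[OF X])
qed

end
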